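(* Assume that $\varphi$ satisfies Conditions (C1), (C2), (C3), (C4) described in the context. Let $B$ be a non-empty ball contained in a connected component of $\Omega$ with $\operatorname{diam}B\le\frac12\operatorname{diam}B_0$, and let $\omega\subset\Omega$ be a bounded domain with infinitely differentiable boundary such that $B\subset\omega$. Then each coset $\mathbf U\in\Lambda(\Omega)$ contains a unique representative $u$ with $\langle u\rangle_B=0$, and this representative satisfies $$|\langle u\rangle_\omega|\le c_{11}\,|u|_{p,\omega},$$ where $c_{11}$ is a constant independent of $u$ but depending on $\omega$ and $B$. Here $\langle u\rangle_S:=\frac{1}{\operatorname{mes}S}\int_S u\,dx$.
   Context: Let $d\ge 1$ and let $\Omega\subseteq\mathbb R^d$ be a domain (open set, bounded or unbounded, possibly $\Omega=\mathbb R^d$). Functions are complex-valued. Let $a\in L_1(\mathbb R^d)$, $a\ge 0$, and suppose there is a non-empty ball $B_0$ centered at $0$ with $a(z)\ge c_0>0$ for a.e. $z\in B_0$. If $\Omega$ is not connected and $\Omega_1,\Omega_2,\dots$ are its connected components, assume $\operatorname{dist}(\Omega_i,\Omega_{i+1})<\operatorname{diam}B_0$ for all $i$. A real function $r$ on $[0,\infty)$ is almost increasing (resp. almost decreasing) with constant $\beta\ge1$ if $r(s)\le\beta r(t)$ (resp. $\beta r(s)\ge r(t)$) for all $0\le s\le t$. Let $\varphi:[0,\infty)\times\Omega\times\Omega\to[0,\infty)$. Conditions: (C1) for each $u\in L_{1,loc}(\Omega)$ the function $(x,y)\mapsto\varphi(|u(x)-u(y)|,x,y)$ is measurable on $\Omega\times\Omega$;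 (C2) for every $\varepsilon>0$ there is $\delta\in(0,1)$ such that $\varphi(\frac{s+t}{2},x,y)\le(1-\delta)\frac{\varphi(s,x,y)+\varphi(t,x,y)}{2}$ for a.e. $(x,y)$ and all $s,t>0$ with $|s-t|\ge\varepsilon\max\{s,t\}$; (C3) there are constants $1<p_-\le p_+$ and $\beta\ge1$ such that for a.e. $(x,y)$ the function $t\mapsto\varphi(t,x,y)/t^{p_-}$ is almost increasing with constant $\beta$ and $t\mapsto\varphi(t,x,y)/t^{p_+}$ is almost decreasing with constant $\beta$; (C4) for a.e. $(x,y)$: $c_1^{-1}\le\varphi(1,x,y)\le c_1$ with a constant $c_1>0$, $\varphi(0,x,y)=0$, and $\varphi(t,x,y)>0$ for $t>0$. For a domain $D\subseteq\Omega$ and $u\in L_{1,loc}(D)$: $F_D(u)=\int_{D\times D}\varphi(|u(x)-u(y)|,x,y)\,a(x-y)\,dx\,dy\in[0,+\infty]$ and $|u|_{p,D}=\inf\{\lambda>0: F_D(u/\lambda)\le1\}$. On $L_{1,loc}(\Omega)$ let $u\sim v$ iff $u-v$ is a.e. constant; $\Lambda(\Omega)$ is the space of cosets $\mathbf U$ with $|u|_{p,\Omega}<\infty$ for $u\in\mathbf U$. *)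

theory Defs
  imports "HOL-Analysis.Analysis"
begin

definition L1loc :: "'a::euclidean_space set \<Rightarrow> ('a \<Rightarrow> complex) \<Rightarrow> bool" where
  "L1loc D u \<longleftrightarrow> (\<forall>K. compact K \<and> K \<subseteq> D \<longrightarrow> set_integrable lebesgue K u)"

definition Ffun :: "(real \<Rightarrow> 'a \<Rightarrow> 'a \<Rightarrow> real) \<Rightarrow> ('a::euclidean_space \<Rightarrow> real)
    \<Rightarrow> 'a set \<Rightarrow> ('a \<Rightarrow> complex) \<Rightarrow> ennreal" where
  "Ffun \<phi> a D u = (\<integral>\<^sup>+ z. ennreal (\<phi> (cmod (u (fst z) - u (snd z))) (fst z) (snd z)
        * a (fst z - snd z)) \<partial>(lebesgue_on (D \<times> D)))"

text \<open>The Luxemburg-type seminorm |u|_{p,D}; value \<infinity> when the defining set is empty.\<close>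
definition pnorm :: "(real \<Rightarrow> 'a \<Rightarrow> 'a \<Rightarrow> real) \<Rightarrow> ('a::euclidean_space \<Rightarrow> real)
    \<Rightarrow> 'a set \<Rightarrow> ('a \<Rightarrow> complex) \<Rightarrow> ennreal" where
  "pnorm \<phi> a D u = Inf {ennreal l | l. l > 0 \<and> Ffun \<phi> a D (\<lambda>x. u x / of_real l) \<le> 1}"

definition coset_eq :: "'a::euclidean_space set \<Rightarrow> ('a \<Rightarrow> complex) \<Rightarrow> ('a \<Rightarrow> complex) \<Rightarrow> bool" where
  "coset_eq \<Omega> u v \<longleftrightarrow> (\<exists>c. AE x in lebesgue. x \<in> \<Omega> \<longrightarrow> u x - v x = c)"

definition in_Lambda :: "(real \<Rightarrow> 'a \<Rightarrow> 'a \<Rightarrow> real) \<Rightarrow> ('a::euclidean_space \<Rightarrow> real)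
    \<Rightarrow> 'a set \<Rightarrow> ('a \<Rightarrow> complex) \<Rightarrow> bool" where
  "in_Lambda \<phi> a \<Omega> u \<longleftrightarrow> L1loc \<Omega> u \<and> pnorm \<phi> a \<Omega> u < \<infinity>"

definition avg :: "'a::euclidean_space set \<Rightarrow> ('a \<Rightarrow> complex) \<Rightarrow> complex" where
  "avg S u = of_real (1 / measure lebesgue S) * set_lebesgue_integral lebesgue S u"

definition almost_incr_on :: "real set \<Rightarrow> real \<Rightarrow> (real \<Rightarrow> real) \<Rightarrow> bool" where
  "almost_incr_on S \<beta> r \<longleftrightarrow> (\<forall>s\<in>S. \<forall>t\<in>S. s \<le> t \<longrightarrow> r s \<le> \<beta> * r t)"

definition almost_decr_on :: "real set \<Rightarrow> real \<Rightarrow> (real \<Rightarrow> real) \<Rightarrow> bool" where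
  "almost_decr_on S \<beta> r \<longleftrightarrow> (\<forall>s\<in>S. \<forall>t\<in>S. s \<le> t \<longrightarrow> \<beta> * r s \<ge> r t)"

fun Ck_on :: "nat \<Rightarrow> 'a::euclidean_space set \<Rightarrow> ('a \<Rightarrow> real) \<Rightarrow> bool" where
  "Ck_on 0 U f = continuous_on U f"
| "Ck_on (Suc k) U f = (\<exists>f'. (\<forall>x\<in>U. (f has_derivative f' x) (at x)) \<and> (\<forall>v. Ck_on k U (\<lambda>x. f' x v)))"

definition smooth_boundary :: "'a::euclidean_space set \<Rightarrow> bool" where
  "smooth_boundary w \<longleftrightarrow> (\<forall>p\<in>frontier w. \<exists>U \<rho>. open U \<and> p \<in> U \<and> (\<forall>k. Ck_on k U \<rho>)
      \<and> w \<inter> U = {x\<in>U. \<rho> x < 0}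
      \<and> (\<forall>x\<in>U. \<exists>D. (\<rho> has_derivative D) (at x) \<and> D \<noteq> (\<lambda>v. 0)))"

end

theory Submission
  imports Defs
begin

text \<open>
With \<open>\<kappa> = \<beta> c1 / c0\<close>, the lower growth bound in (C3), the normalisation in (C4) and
\<open>a \<ge> c0\<close> on the ball of radius \<open>r0\<close> give \<open>t \<le> 1 + \<kappa> \<phi>(t,x,y) a(x - y)\<close>
for \<open>t \<ge> 0\<close> and \<open>|x - y| < r0\<close>; nothing else about \<open>\<phi>\<close>, \<open>a\<close> or \<open>\<Omega>\<close> is needed.
Taking \<open>t = |u(x) - u(y)| / l\<close> for an admissible \<open>l\<close> (one with \<open>F(u/l) \<le> 1\<close>) and
integrating over \<open>D1 \<times> D2\<close> bounds the oscillation of \<open>u\<close> between two sets closer than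
\<open>r0\<close> by a multiple of \<open>l\<close>. For \<open>D1 = D2 = B\<close> this makes \<open>u\<close> integrable on \<open>B\<close>,
so the coset of \<open>u\<close> has exactly one representative with mean zero on \<open>B\<close>. For two balls of
radius \<open>r0/4\<close> around points of a common such ball it bounds the difference of the means;
since \<open>\<omega>\<close> is connected and covered by finitely many such balls, chaining compares the mean
over \<open>\<omega>\<close> with the mean over \<open>B\<close>. Taking the infimum over admissible \<open>l\<close> yields
the bound by \<open>|u|\<^sub>p\<^sub>,\<^sub>\<omega>\<close>.
\<close>

lemma AE_lebesgue_pair_fst:
  fixes P :: "'a::euclidean_space \<Rightarrow> bool"
  assumes "AE x in lebesgue. P x"
  shows "AE z in (lebesgue :: ('a \<times> 'a) measure). P (fst z)"
proof -
  have "AE x in lborel. P x"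
    using assms by (simp add: AE_completion_iff)
  then obtain N where N: "N \<in> null_sets lborel" "{x. \<not> P x} \<subseteq> N"
    by (auto simp: eventually_ae_filter)
  have "N \<times> UNIV \<in> null_sets (lborel \<Otimes>\<^sub>M (lborel :: 'a measure))"
    using N by (auto simp: null_sets_def lborel.emeasure_pair_measure_Times)
  then have "AE z in (lborel :: ('a \<times> 'a) measure). P (fst z)"
    unfolding lborel_prod[symmetric] by (rule AE_I') (use N in auto)
  then show ?thesis by (simp add: AE_completion_iff)
qed

lemma AE_lebesgue_pair_snd:
  fixes P :: "'a::euclidean_space \<Rightarrow> bool"
  assumes "AE x in lebesgue. P x"
  shows "AE z in (lebesgue :: ('a \<times> 'a) measure). P (snd z)"
proof -
  have "AE x in lborel. P x"
    using assms by (simp add: AE_completion_iff)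
  then obtain N where N: "N \<in> null_sets lborel" "{x. \<not> P x} \<subseteq> N"
    by (auto simp: eventually_ae_filter)
  have "UNIV \<times> N \<in> null_sets ((lborel :: 'a measure) \<Otimes>\<^sub>M lborel)"
    using N by (auto simp: null_sets_def lborel.emeasure_pair_measure_Times)
  then have "AE z in (lborel :: ('a \<times> 'a) measure). P (snd z)"
    unfolding lborel_prod[symmetric] by (rule AE_I') (use N in auto)
  then show ?thesis by (simp add: AE_completion_iff)
qed

lemma AE_lebesgue_pair_diff:
  fixes P :: "'a::euclidean_space \<Rightarrow> bool"
  assumes "AE x in lebesgue. P x"
  shows "AE z in (lebesgue :: ('a \<times> 'a) measure). P (fst z - snd z)"
proof -
  have "AE x in lborel. P x"
    using assms by (simp add: AE_completion_iff)
  then obtain N where N: "N \<in> null_sets lborel" "{x. \<not> P x} \<subseteq> N"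
    by (auto simp: eventually_ae_filter)
  define S where "S = (\<lambda>z::'a \<times> 'a. fst z - snd z) -` N"
  have S_sets: "S \<in> sets (lborel \<Otimes>\<^sub>M lborel)"
  proof -
    have "(\<lambda>z::'a \<times> 'a. fst z - snd z) \<in> borel_measurable borel"
      by (intro borel_measurable_continuous_onI continuous_intros)
    then have "S \<in> sets borel"
      using N unfolding S_def by (metis measurable_sets_borel null_setsD2 sets_lborel)
    then show ?thesis
      by (simp only: lborel_prod sets_lborel)
  qed
  have "emeasure lborel (Pair x -` S) = 0" for x
  proof -
    have "lborel = density (distr lborel borel (\<lambda>y. x + (-1) *\<^sub>R y)) (\<lambda>_. \<bar>-1::real\<bar> ^ DIM('a))"
      by (rule lborel_affine) simp
    then have "emeasure lborel N = emeasure (distr lborel borel (\<lambda>y::'a. x - y)) N"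
      by (simp add: density_1)
    also have "\<dots> = emeasure lborel ((\<lambda>y. x - y) -` N)"
      using N by (subst emeasure_distr) auto
    finally show ?thesis using N by (simp add: S_def vimage_def null_sets_def)
  qed
  then have "S \<in> null_sets (lborel \<Otimes>\<^sub>M lborel)"
    using S_sets by (simp add: null_sets_def lborel.emeasure_pair_measure_alt)
  then have "AE z in (lborel :: ('a \<times> 'a) measure). P (fst z - snd z)"
    unfolding lborel_prod[symmetric] by (rule AE_I') (use N in \<open>auto simp: S_def\<close>)
  then show ?thesis by (simp add: AE_completion_iff)
qed

lemma set_borel_measurable_lebesgue_AE_eq_borel:
  fixes w :: "'a::euclidean_space \<Rightarrow> complex"
  assumes "set_borel_measurable lebesgue A w"
  obtains g where "g \<in> borel_measurable borel" "AE x in lebesgue. x \<in> A \<longrightarrow> w x = g x"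
proof -
  define f where "f x = indicator A x *\<^sub>R w x" for x
  have re: "(\<lambda>x. Re (f x)) \<in> borel_measurable lebesgue"
    and im: "(\<lambda>x. Im (f x)) \<in> borel_measurable lebesgue"
    using assms unfolding f_def set_borel_measurable_def by measurable
  obtain gr where gr: "gr \<in> borel_measurable lborel" "AE x in lborel. Re (f x) = gr x"
    using completion_ex_borel_measurable_real[OF re] by blast
  obtain gi where gi: "gi \<in> borel_measurable lborel" "AE x in lborel. Im (f x) = gi x"
    using completion_ex_borel_measurable_real[OF im] by blast
  have "(\<lambda>x. of_real (gr x) + \<i> * of_real (gi x)) \<in> borel_measurable borel"
    using gr(1) gi(1) by measurable
  moreover have "AE x in lborel. x \<in> A \<longrightarrow> w x = of_real (gr x) + \<i> * of_real (gi x)"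
    using gr(2) gi(2) by eventually_elim (auto simp: f_def complex_eq_iff)
  then have "AE x in lebesgue. x \<in> A \<longrightarrow> w x = of_real (gr x) + \<i> * of_real (gi x)"
    by (simp add: AE_completion_iff)
  ultimately show ?thesis by (rule that)
qed

lemma L1loc_set_borel_measurable:
  assumes "L1loc D u" "open U" "U \<subseteq> D"
  shows "set_borel_measurable lebesgue U u"
proof -
  obtain C where C: "\<And>n. compact (C n)" "\<And>n. C n \<subseteq> U"
      "\<And>n. C n \<subseteq> interior (C (Suc n))" "\<Union>(range C) = U"
    using open_Union_compact_subsets[OF \<open>open U\<close>] by metis
  have "incseq C"
    using C(3) interior_subset by (intro incseq_SucI) blast
  then have lim: "(\<lambda>n. indicator (C n) x *\<^sub>R u x) \<longlonglongrightarrow> indicator U x *\<^sub>R u x" for x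
    using LIMSEQ_indicator_incseq[of C x] C(4) by (intro tendsto_scaleR) auto
  have "set_integrable lebesgue (C n) u" for n
    using assms(1,3) C(1,2) unfolding L1loc_def by blast
  then have "(\<lambda>x. indicator (C n) x *\<^sub>R u x) \<in> borel_measurable lebesgue" for n
    unfolding set_integrable_def by (rule borel_measurable_integrable)
  then show ?thesis
    unfolding set_borel_measurable_def using lim by (rule borel_measurable_LIMSEQ_metric)
qed

lemma measure_lebesgue_open_pos:
  fixes S :: "'a::euclidean_space set"
  assumes "open S" "bounded S" "S \<noteq> {}"
  shows "measure lebesgue S > 0"
proof -
  have "S \<notin> null_sets lebesgue"
    using open_not_negligible[OF assms(1,3)] assms(1) by (simp add: negligible_iff_null_sets borel_open)
  moreover have "S \<in> lmeasurable"
    using assms(1,2) by (simp add: lmeasurable_open)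
  ultimately have "measure lebesgue S \<noteq> 0"
    using emeasure_eq_measure2[of S lebesgue] by (auto simp: fmeasurable_def)
  then show ?thesis
    by (simp add: zero_less_measure_iff)
qed

lemma AE_lborel_obtain_in_open:
  fixes E :: "'a::euclidean_space set"
  assumes "AE x in lborel. P x" "open E" "E \<noteq> {}"
  obtains x where "x \<in> E" "P x"
proof -
  have "\<exists>x\<in>E. P x"
  proof (rule ccontr)
    assume "\<not> (\<exists>x\<in>E. P x)"
    then have "AE x in lborel. x \<notin> E"
      using assms(1) by (auto elim: eventually_mono)
    then obtain N where N: "N \<in> null_sets lborel" "E \<subseteq> N"
      by (auto elim!: AE_E simp: null_sets_def)
    then have "E \<in> null_sets lborel"
      using null_sets_subset[OF N(1) _ N(2)] assms(2) by simp
    then have "E \<in> null_sets lebesgue"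
      by (rule null_sets_completionI)
    then show False
      using open_not_negligible[OF assms(2,3)] assms(2) by (simp add: negligible_iff_null_sets borel_open)
  qed
  then show ?thesis
    using that by blast
qed

lemma set_integrable_lborel_if_deviation_finite:
  fixes g :: "'a::euclidean_space \<Rightarrow> complex"
  assumes g: "g \<in> borel_measurable borel" and E: "E \<in> sets borel" "bounded E"
    and deviation: "(\<integral>\<^sup>+y. indicator E y * ennreal (cmod (c - g y)) \<partial>lborel) < \<infinity>"
  shows "integrable lborel (\<lambda>y. indicator E y *\<^sub>R g y)"
proof -
  have [measurable]: "g \<in> borel_measurable lborel" "E \<in> sets lborel"
    using g E by auto
  have "(\<integral>\<^sup>+y. ennreal (norm (indicator E y *\<^sub>R g y)) \<partial>lborel)
      \<le> (\<integral>\<^sup>+y. indicator E y * ennreal (cmod (c - g y)) + ennreal (cmod c) * indicator E y \<partial>lborel)"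
  proof (rule nn_integral_mono)
    fix y
    have "cmod (g y) \<le> cmod (c - g y) + cmod c"
      using norm_triangle_ineq4[of c "c - g y"] by simp
    then show "ennreal (norm (indicator E y *\<^sub>R g y))
        \<le> indicator E y * ennreal (cmod (c - g y)) + ennreal (cmod c) * indicator E y"
      by (auto simp: indicator_def ennreal_plus[symmetric] simp del: ennreal_plus intro!: ennreal_leI)
  qed
  also have "\<dots> = (\<integral>\<^sup>+y. indicator E y * ennreal (cmod (c - g y)) \<partial>lborel) + ennreal (cmod c) * emeasure lborel E"
  proof -
    have "(\<integral>\<^sup>+y. indicator E y * ennreal (cmod (c - g y)) + ennreal (cmod c) * indicator E y \<partial>lborel)
        = (\<integral>\<^sup>+y. indicator E y * ennreal (cmod (c - g y)) \<partial>lborel)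
          + (\<integral>\<^sup>+y. ennreal (cmod c) * indicator E y \<partial>lborel)"
      by (rule nn_integral_add) measurable
    then show ?thesis
      using E(1) by (simp add: nn_integral_cmult_indicator)
  qed
  also have "\<dots> < \<infinity>"
    using deviation emeasure_bounded_finite[OF E(2)] by (simp add: ennreal_mult_less_top)
  finally show ?thesis
    by (rule integrableI_bounded[rotated]) measurable
qed

lemma bounded_obtain_finite_ball_cover:
  fixes S :: "'a::euclidean_space set"
  assumes "bounded S" "\<rho> > 0"
  obtains F where "F \<subseteq> S" "finite F" "S \<subseteq> (\<Union>c\<in>F. ball c \<rho>)"
proof -
  have compact: "compact (closure S)" and net: "closure S \<subseteq> (\<Union>c\<in>S. ball c \<rho>)"
    using assms by (auto simp: compact_closure closure_approachable)
  obtain F where F: "F \<subseteq> S" "finite F" "closure S \<subseteq> (\<Union>c\<in>F. ball c \<rho>)"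
    by (rule compactE_image[OF compact _ net]) auto
  moreover have "S \<subseteq> (\<Union>c\<in>F. ball c \<rho>)"
    by (rule order_trans[OF closure_subset F(3)])
  ultimately show ?thesis
    using that by blast
qed

lemma ennreal_set_integral_eq_nn_integral:
  fixes f :: "'a \<Rightarrow> real"
  assumes "set_integrable M A f" "\<And>x. x \<in> A \<Longrightarrow> 0 \<le> f x"
  shows "ennreal (LINT x:A|M. f x) = (\<integral>\<^sup>+x. indicator A x * ennreal (f x) \<partial>M)"
proof -
  have "(\<integral>\<^sup>+x. indicator A x * ennreal (f x) \<partial>M) = (\<integral>\<^sup>+x. ennreal (indicator A x *\<^sub>R f x) \<partial>M)"
    by (simp add: indicator_mult_ennreal)
  also have "\<dots> = ennreal (LINT x|M. indicator A x *\<^sub>R f x)"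
    using assms by (intro nn_integral_eq_integral) (auto simp: set_integrable_def indicator_def)
  finally show ?thesis
    by (simp add: set_lebesgue_integral_def)
qed

lemma avg_diff_const:
  assumes "A \<in> lmeasurable" "measure lebesgue A > 0" "set_integrable lebesgue A w"
  shows "avg A (\<lambda>x. w x - c) = avg A w - c"
proof -
  have "(LINT x:A|lebesgue. w x - c) = (LINT x:A|lebesgue. w x) - (LINT x:A|lebesgue. c)"
    using assms by (intro set_integral_diff(2)) auto
  also have "(LINT x:A|lebesgue. c) = measure lebesgue A *\<^sub>R c"
    using assms(1) by (intro set_integral_const) (auto simp: fmeasurable_def)
  finally have "(LINT x:A|lebesgue. w x - c) = (LINT x:A|lebesgue. w x) - measure lebesgue A *\<^sub>R c" .
  then show ?thesis
    using assms(2) unfolding avg_def by (simp add: scaleR_conv_of_real field_simps)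
qed

lemma norm_avg_diff_le:
  assumes "A \<in> lmeasurable" "measure lebesgue A > 0" "set_integrable lebesgue A w"
  shows "cmod (avg A w - c) \<le> (LINT x:A|lebesgue. cmod (w x - c)) / measure lebesgue A"
proof -
  have "cmod (avg A w - c) = cmod (avg A (\<lambda>x. w x - c))"
    using assms by (simp add: avg_diff_const)
  also have "\<dots> = cmod (LINT x:A|lebesgue. w x - c) / measure lebesgue A"
    using assms(2) by (simp add: avg_def norm_mult norm_divide)
  also have "\<dots> \<le> (LINT x:A|lebesgue. cmod (w x - c)) / measure lebesgue A"
    using assms by (intro divide_right_mono set_integral_norm_bound) auto
  finally show ?thesis .
qed

lemma ennreal_norm_diff_avg_le:
  fixes w g :: "'a::euclidean_space \<Rightarrow> complex"
  assumes A: "A \<in> lmeasurable" "measure lebesgue A > 0" and w: "set_integrable lebesgue A w"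
    and wg: "AE y in lebesgue. y \<in> A \<longrightarrow> w y = g y"
  shows "ennreal (cmod (c - avg A w))
    \<le> ennreal (1 / measure lebesgue A) * (\<integral>\<^sup>+y. indicator A y * ennreal (cmod (c - g y)) \<partial>lborel)"
proof -
  have int: "set_integrable lebesgue A (\<lambda>y. cmod (w y - c))"
    using w A(1) by (auto intro: set_integrable_norm)
  have "cmod (c - avg A w) \<le> (LINT y:A|lebesgue. cmod (w y - c)) / measure lebesgue A"
    using norm_avg_diff_le[OF A w, of c] by (simp add: norm_minus_commute)
  then have "ennreal (cmod (c - avg A w)) \<le> ennreal (1 / measure lebesgue A * (LINT y:A|lebesgue. cmod (w y - c)))"
    by (intro ennreal_leI) simp
  also have "\<dots> = ennreal (1 / measure lebesgue A) * ennreal (LINT y:A|lebesgue. cmod (w y - c))"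
    using A(2) by (intro ennreal_mult') simp
  also have "ennreal (LINT y:A|lebesgue. cmod (w y - c))
      = (\<integral>\<^sup>+y. indicator A y * ennreal (cmod (w y - c)) \<partial>lebesgue)"
    using int by (rule ennreal_set_integral_eq_nn_integral) simp
  also have "\<dots> = (\<integral>\<^sup>+y. indicator A y * ennreal (cmod (c - g y)) \<partial>lebesgue)"
    using wg by (intro nn_integral_cong_AE, eventually_elim) (auto simp: indicator_def norm_minus_commute)
  also have "\<dots> = (\<integral>\<^sup>+y. indicator A y * ennreal (cmod (c - g y)) \<partial>lborel)"
    by (rule nn_integral_completion)
  finally show ?thesis .
qed

lemma set_integral_norm_diff_le:
  fixes w :: "'a::euclidean_space \<Rightarrow> complex"
  assumes "A \<in> lmeasurable" "set_integrable lebesgue A w"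
  shows "(LINT x:A|lebesgue. cmod (w x - c)) \<le> (LINT x:A|lebesgue. cmod (w x - b)) + measure lebesgue A * cmod (b - c)"
proof -
  have wb: "set_integrable lebesgue A (\<lambda>x. cmod (w x - b))"
    and bc: "set_integrable lebesgue A (\<lambda>x. cmod (b - c))"
    using assms by (auto intro: set_integrable_norm)
  have "(LINT x:A|lebesgue. cmod (w x - c)) \<le> (LINT x:A|lebesgue. cmod (w x - b) + cmod (b - c))"
    using assms by (intro set_integral_mono set_integrable_norm set_integral_add(1)[OF wb bc])
      (auto intro: order_trans[OF _ norm_triangle_ineq] simp: diff_add_eq)
  also have "\<dots> = (LINT x:A|lebesgue. cmod (w x - b)) + measure lebesgue A * cmod (b - c)"
    using assms(1) by (subst set_integral_add(2)[OF wb bc], subst set_integral_const) (auto simp: fmeasurable_def)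
  finally show ?thesis .
qed

lemma set_integral_le_sum_of_cover:
  fixes f :: "'a \<Rightarrow> real"
  assumes "finite I" "A \<subseteq> (\<Union>i\<in>I. P i)" "set_integrable M A f"
    and "\<And>i. i \<in> I \<Longrightarrow> set_integrable M (P i) f" "\<And>x. x \<in> (\<Union>i\<in>I. P i) \<Longrightarrow> f x \<ge> 0"
  shows "(LINT x:A|M. f x) \<le> (\<Sum>i\<in>I. LINT x:P i|M. f x)"
proof -
  have "(LINT x|M. indicator A x * f x) \<le> (LINT x|M. (\<Sum>i\<in>I. indicator (P i) x * f x))"
  proof (rule integral_mono)
    show "indicator A x * f x \<le> (\<Sum>i\<in>I. indicator (P i) x * f x)" for x
    proof (cases "x \<in> A")
      case True
      then obtain j where "j \<in> I" "x \<in> P j" using assms(2) by auto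
      then have "indicator A x * f x \<le> indicator (P j) x * f x" using True by simp
      also have "\<dots> \<le> (\<Sum>i\<in>I. indicator (P i) x * f x)"
        using \<open>j \<in> I\<close> assms(1,5) by (intro member_le_sum) (auto simp: indicator_def)
      finally show ?thesis .
    next
      case False
      have "0 \<le> (\<Sum>i\<in>I. indicator (P i) x * f x)"
        using assms(5) by (intro sum_nonneg) (auto simp: indicator_def)
      then show ?thesis using False by simp
    qed
  qed (use assms(3,4) in \<open>auto simp: set_integrable_def\<close>)
  then show ?thesis
    using assms(4) by (simp add: set_lebesgue_integral_def set_integrable_def integral_sum)
qed

lemma norm_avg_diff_le_sum_of_cover:
  fixes v :: "'a::euclidean_space \<Rightarrow> complex"
  assumes "finite F" "U \<in> lmeasurable" "measure lebesgue U > 0" "U \<subseteq> (\<Union>c\<in>F. P c)"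
    and "set_integrable lebesgue U v"
    and "\<And>c. c \<in> F \<Longrightarrow> P c \<in> lmeasurable" "\<And>c. c \<in> F \<Longrightarrow> set_integrable lebesgue (P c) v"
  shows "cmod (avg U v - m) \<le> (\<Sum>c\<in>F. LINT x:P c|lebesgue. cmod (v x - m)) / measure lebesgue U"
proof -
  have "cmod (avg U v - m) \<le> (LINT x:U|lebesgue. cmod (v x - m)) / measure lebesgue U"
    by (rule norm_avg_diff_le[OF assms(2,3,5)])
  also have "(LINT x:U|lebesgue. cmod (v x - m)) \<le> (\<Sum>c\<in>F. LINT x:P c|lebesgue. cmod (v x - m))"
  proof (rule set_integral_le_sum_of_cover[OF assms(1,4)])
    show "set_integrable lebesgue U (\<lambda>x. cmod (v x - m))"
      using assms(2,5) by (auto intro: set_integrable_norm)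
    show "set_integrable lebesgue (P c) (\<lambda>x. cmod (v x - m))" if "c \<in> F" for c
      using assms(6,7)[OF that] by (auto intro: set_integrable_norm)
  qed simp
  finally show ?thesis
    using assms(3) by (simp add: divide_right_mono)
qed

lemma normalized_representative:
  assumes B: "B \<in> lmeasurable" "measure lebesgue B > 0" "B \<subseteq> \<Omega>"
    and u: "set_integrable lebesgue B u"
  shows "\<exists>v. coset_eq \<Omega> u v \<and> avg B v = 0 \<and>
           (\<forall>w. coset_eq \<Omega> u w \<and> avg B w = 0 \<longrightarrow> (AE x in lebesgue. x \<in> \<Omega> \<longrightarrow> w x = v x))"
proof -
  define v where "v x = u x - avg B u" for x
  have "coset_eq \<Omega> u v" by (auto simp: coset_eq_def v_def)
  moreover have "avg B v = 0"
    using avg_diff_const[OF B(1,2) u, of "avg B u"] by (simp add: v_def[abs_def])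
  moreover have "AE x in lebesgue. x \<in> \<Omega> \<longrightarrow> w x = v x"
    if w: "coset_eq \<Omega> u w" "avg B w = 0" for w
  proof -
    obtain c where c: "AE x in lebesgue. x \<in> \<Omega> \<longrightarrow> u x - w x = c"
      using w(1) unfolding coset_eq_def by blast
      have "set_integrable lebesgue B (\<lambda>x. u x - c)"
      using B u by auto
    then have m: "(\<lambda>x. indicator B x *\<^sub>R (u x - c)) \<in> borel_measurable lebesgue"
      unfolding set_integrable_def by (rule borel_measurable_integrable)
    have ae: "AE x in lebesgue. indicator B x *\<^sub>R (u x - c) = indicator B x *\<^sub>R w x"
      using c by eventually_elim (use B in \<open>auto simp: indicator_def\<close>)
    have "avg B w = avg B (\<lambda>x. u x - c)"
      using integral_cong_AE[OF m borel_measurable_AE[OF m ae] ae]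
      by (simp add: avg_def set_lebesgue_integral_def)
    then have "c = avg B u"
      using w(2) avg_diff_const[OF B(1,2) u] by simp
    with c show ?thesis
      by (auto simp: v_def algebra_simps elim!: eventually_mono)
  qed
  ultimately show ?thesis by blast
qed

lemma ex_energy_le_1_if_pnorm_finite:
  assumes "pnorm \<phi> a D u < \<infinity>"
  obtains l where "l > 0" "Ffun \<phi> a D (\<lambda>x. u x / of_real l) \<le> 1"
proof -
  have "{ennreal l | l. l > 0 \<and> Ffun \<phi> a D (\<lambda>x. u x / of_real l) \<le> 1} \<noteq> {}"
    using assms unfolding pnorm_def by (intro notI) simp
  then show ?thesis
    using that by blast
qed

lemma ennreal_le_mult_pnorm:
  assumes "C > 0" and bound: "\<And>l. l > 0 \<Longrightarrow> Ffun \<phi> a D (\<lambda>x. v x / of_real l) \<le> 1 \<Longrightarrow> r \<le> C * l"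
  shows "ennreal r \<le> ennreal C * pnorm \<phi> a D v"
proof -
  have "ennreal (r / C) \<le> pnorm \<phi> a D v"
    unfolding pnorm_def
  proof (rule Inf_greatest, clarify)
    fix l assume "l > 0" "Ffun \<phi> a D (\<lambda>x. v x / of_real l) \<le> 1"
    then have "r \<le> C * l" by (rule bound)
    then show "ennreal (r / C) \<le> ennreal l"
      using \<open>C > 0\<close> by (intro ennreal_leI) (simp add: divide_le_eq mult.commute)
  qed
  then have "ennreal C * ennreal (r / C) \<le> ennreal C * pnorm \<phi> a D v"
    by (rule mult_left_mono) simp
  then show ?thesis
    using \<open>C > 0\<close> by (simp add: ennreal_mult'[symmetric])
qed

lemma almost_incr_on_powr_lower_bound:
  fixes f :: "real \<Rightarrow> real"
  assumes "almost_incr_on {0<..} \<beta> (\<lambda>t. f t / t powr p)" "p \<ge> 1"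
    and "c > 0" "inverse c \<le> f 1" "t \<ge> 1"
  shows "t \<le> \<beta> * c * f t"
proof -
  have "(1::real) \<in> {0<..}" "t \<in> {0<..}"
    using assms(5) by auto
  then have "f 1 / 1 powr p \<le> \<beta> * (f t / t powr p)"
    using assms(1,5) unfolding almost_incr_on_def by blast
  then have "inverse c \<le> \<beta> * (f t / t powr p)"
    using assms(4) by simp
  then have "t powr p \<le> \<beta> * c * f t"
    using assms(3,5) by (simp add: field_simps)
  moreover have "t \<le> t powr p"
    using powr_mono[of 1 p t] assms by simp
  ultimately show ?thesis by linarith
qed

lemma ennreal_le_affine_split:
  fixes c l \<kappa> :: real
  assumes "c \<ge> 0" "l > 0" "\<kappa> > 0"
  shows "ennreal c \<le> ennreal l * (1 + ennreal \<kappa> * ennreal ((c / l - 1) / \<kappa>))"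
proof -
  have "c / l \<le> 1 + \<kappa> * max 0 ((c / l - 1) / \<kappa>)"
    using assms(3) by (cases "c / l \<ge> 1") (simp_all add: max_def)
  then have "ennreal c \<le> ennreal (l * (1 + \<kappa> * max 0 ((c / l - 1) / \<kappa>)))"
    using assms(2) by (intro ennreal_leI) (simp add: field_simps)
  also have "\<dots> = ennreal l * (1 + ennreal \<kappa> * ennreal ((c / l - 1) / \<kappa>))"
    using assms(2,3) by (simp add: ennreal_mult ennreal_max_0)
  finally show ?thesis .
qed

locale coercive_kernel =
  fixes \<phi> :: "real \<Rightarrow> 'a::euclidean_space \<Rightarrow> 'a \<Rightarrow> real" and a :: "'a \<Rightarrow> real"
    and \<Omega> :: "'a set" and r0 \<kappa> :: real
  assumes \<kappa>_pos: "\<kappa> > 0"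
    and coercive: "AE z in lebesgue. z \<in> \<Omega> \<times> \<Omega> \<longrightarrow> dist (fst z) (snd z) < r0 \<longrightarrow>
        (\<forall>t \<ge> 0. t \<le> 1 + \<kappa> * (\<phi> t (fst z) (snd z) * a (fst z - snd z)))"
begin

lemma excess_oscillation_le_energy:
  assumes D: "open D" "D \<subseteq> \<Omega>" and D1: "D1 \<subseteq> D" and D2: "D2 \<subseteq> D"
    and close: "\<And>x y. x \<in> D1 \<Longrightarrow> y \<in> D2 \<Longrightarrow> dist x y < r0"
    and l: "l > 0" and energy: "Ffun \<phi> a D (\<lambda>x. w x / of_real l) \<le> 1"
    and wg: "AE x in lebesgue. x \<in> D1 \<union> D2 \<longrightarrow> w x = g x"
  shows "(\<integral>\<^sup>+z. indicator (D1 \<times> D2) z * ennreal ((cmod (g (fst z) - g (snd z)) / l - 1) / \<kappa>)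
      \<partial>(lborel \<Otimes>\<^sub>M lborel)) \<le> 1"
proof -
  define t where "t z = cmod (g (fst z) - g (snd z)) / l" for z :: "'a \<times> 'a"
  define f where "f z = indicator (D \<times> D) z * ennreal (\<phi> (cmod (w (fst z) / of_real l - w (snd z) / of_real l))
      (fst z) (snd z) * a (fst z - snd z))" for z
  have "AE z in lebesgue. indicator (D1 \<times> D2) z * ennreal ((t z - 1) / \<kappa>) \<le> f z"
    using AE_lebesgue_pair_fst[OF wg] AE_lebesgue_pair_snd[OF wg] coercive
  proof eventually_elim
    case (elim z)
    show ?case
    proof (cases "z \<in> D1 \<times> D2")
      case True
      then have z: "fst z \<in> D" "snd z \<in> D" "dist (fst z) (snd z) < r0"
        using D1 D2 close by (auto simp: mem_Times_iff)
      have t_eq: "t z = cmod (w (fst z) / of_real l - w (snd z) / of_real l)"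
        using elim True l by (simp add: t_def mem_Times_iff diff_divide_distrib[symmetric] norm_divide)
      then have "t z \<le> 1 + \<kappa> * (\<phi> (t z) (fst z) (snd z) * a (fst z - snd z))"
        using elim(3) z D(2) l by (auto simp: mem_Times_iff t_def)
      then have "(t z - 1) / \<kappa> \<le> \<phi> (t z) (fst z) (snd z) * a (fst z - snd z)"
        using \<kappa>_pos by (simp add: divide_le_eq mult.commute)
      then show ?thesis
        using True z(1,2) t_eq by (simp add: f_def mem_Times_iff ennreal_leI)
    qed simp
  qed
  then have "(\<integral>\<^sup>+z. indicator (D1 \<times> D2) z * ennreal ((t z - 1) / \<kappa>) \<partial>lebesgue) \<le> (\<integral>\<^sup>+z. f z \<partial>lebesgue)"
    by (rule nn_integral_mono_AE)
  also have "\<dots> = Ffun \<phi> a D (\<lambda>x. w x / of_real l)"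
    unfolding Ffun_def f_def using D(1)
    by (subst nn_integral_restrict_space) (auto simp: open_Times borel_open mult.commute)
  finally have "(\<integral>\<^sup>+z. indicator (D1 \<times> D2) z * ennreal ((t z - 1) / \<kappa>) \<partial>lebesgue) \<le> 1"
    using energy by (rule order_trans)
  then show ?thesis
    by (simp only: lborel_prod nn_integral_completion t_def)
qed

lemma pair_oscillation_le_energy:
  assumes D: "open D" "D \<subseteq> \<Omega>"
    and D1: "open D1" "bounded D1" "D1 \<subseteq> D" and D2: "open D2" "bounded D2" "D2 \<subseteq> D"
    and close: "\<And>x y. x \<in> D1 \<Longrightarrow> y \<in> D2 \<Longrightarrow> dist x y < r0"
    and l: "l > 0" and energy: "Ffun \<phi> a D (\<lambda>x. w x / of_real l) \<le> 1"
    and g: "g \<in> borel_measurable borel" and wg: "AE x in lebesgue. x \<in> D1 \<union> D2 \<longrightarrow> w x = g x"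
  shows "(\<integral>\<^sup>+x. \<integral>\<^sup>+y. indicator D1 x * indicator D2 y * ennreal (cmod (g x - g y)) \<partial>lborel \<partial>lborel)
     \<le> ennreal (l * (measure lebesgue D1 * measure lebesgue D2 + \<kappa>))"
proof -
  have [measurable]: "g \<in> borel_measurable lborel" "D1 \<in> sets lborel" "D2 \<in> sets lborel"
    using g D1 D2 by auto
  define h where "h z = indicator (D1 \<times> D2) z * ennreal ((cmod (g (fst z) - g (snd z)) / l - 1) / \<kappa>)" for z
  have [measurable]: "h \<in> borel_measurable (lborel \<Otimes>\<^sub>M lborel)"
    unfolding h_def by measurable
  have split: "indicator D1 x * indicator D2 y * ennreal (cmod (g x - g y))
      \<le> ennreal l * (indicator (D1 \<times> D2) (x, y) + ennreal \<kappa> * h (x, y))" for x y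
    using ennreal_le_affine_split[of "cmod (g x - g y)" l \<kappa>] l \<kappa>_pos
    by (simp add: h_def indicator_def)
  have measure_eq: "emeasure lborel S = ennreal (measure lebesgue S)" if "open S" "bounded S" for S :: "'a set"
    using that emeasure_bounded_finite[of S]
    by (simp add: emeasure_eq_ennreal_measure measure_completion borel_open less_top[symmetric])
  have "(\<integral>\<^sup>+x. \<integral>\<^sup>+y. indicator D1 x * indicator D2 y * ennreal (cmod (g x - g y)) \<partial>lborel \<partial>lborel)
      \<le> (\<integral>\<^sup>+x. \<integral>\<^sup>+y. (\<lambda>z. ennreal l * (indicator (D1 \<times> D2) z + ennreal \<kappa> * h z)) (x, y) \<partial>lborel \<partial>lborel)"
    using split by (intro nn_integral_mono) simp
  also have "\<dots> = (\<integral>\<^sup>+z. ennreal l * (indicator (D1 \<times> D2) z + ennreal \<kappa> * h z) \<partial>(lborel \<Otimes>\<^sub>M lborel))"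
    by (rule lborel.nn_integral_fst) measurable
  also have "\<dots> = ennreal l * (emeasure (lborel \<Otimes>\<^sub>M lborel) (D1 \<times> D2)
      + ennreal \<kappa> * (\<integral>\<^sup>+z. h z \<partial>(lborel \<Otimes>\<^sub>M lborel)))"
  proof -
    have "(\<integral>\<^sup>+z. indicator (D1 \<times> D2) z + ennreal \<kappa> * h z \<partial>(lborel \<Otimes>\<^sub>M lborel))
        = (\<integral>\<^sup>+z. indicator (D1 \<times> D2) z \<partial>(lborel \<Otimes>\<^sub>M lborel)) + (\<integral>\<^sup>+z. ennreal \<kappa> * h z \<partial>(lborel \<Otimes>\<^sub>M lborel))"
      by (rule nn_integral_add) measurable
    moreover have "D1 \<times> D2 \<in> sets (lborel \<Otimes>\<^sub>M lborel)"
      by measurable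
    ultimately show ?thesis
      by (simp add: nn_integral_cmult)
  qed
  also have "\<dots> \<le> ennreal l * (ennreal (measure lebesgue D1 * measure lebesgue D2) + ennreal \<kappa> * 1)"
    using D1 D2 excess_oscillation_le_energy[OF D D1(3) D2(3) close l energy wg]
    by (intro mult_left_mono add_mono) (simp_all add: h_def lborel.emeasure_pair_measure_Times measure_eq ennreal_mult)
  also have "\<dots> = ennreal (l * (measure lebesgue D1 * measure lebesgue D2 + \<kappa>))"
    using l \<kappa>_pos by (simp add: ennreal_mult[symmetric] ennreal_plus[symmetric] del: ennreal_plus)
  finally show ?thesis .
qed

lemma mean_oscillation_le_energy:
  assumes D: "open D" "D \<subseteq> \<Omega>" and w: "set_integrable lebesgue D w"
    and D1: "open D1" "bounded D1" "D1 \<subseteq> D"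
    and D2: "open D2" "bounded D2" "D2 \<noteq> {}" "D2 \<subseteq> D"
    and close: "\<And>x y. x \<in> D1 \<Longrightarrow> y \<in> D2 \<Longrightarrow> dist x y < r0"
    and l: "l > 0" and energy: "Ffun \<phi> a D (\<lambda>x. w x / of_real l) \<le> 1"
  shows "(LINT x:D1|lebesgue. cmod (w x - avg D2 w)) \<le> l * (measure lebesgue D1 + \<kappa> / measure lebesgue D2)"
proof -
  have "set_borel_measurable lebesgue D w"
    using w unfolding set_integrable_def set_borel_measurable_def by (rule borel_measurable_integrable)
  then obtain g where g: "g \<in> borel_measurable borel" and wg: "AE x in lebesgue. x \<in> D \<longrightarrow> w x = g x"
    by (rule set_borel_measurable_lebesgue_AE_eq_borel)
  have [measurable]: "g \<in> borel_measurable lborel" "D1 \<in> sets lborel" "D2 \<in> sets lborel"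
    using g D1 D2 by auto
  have D1_lmeas: "D1 \<in> lmeasurable" and D2_lmeas: "D2 \<in> lmeasurable"
    using D1 D2 by (simp_all add: lmeasurable_open)
  have D2_pos: "measure lebesgue D2 > 0"
    using D2(1-3) by (rule measure_lebesgue_open_pos)
  have wD1: "set_integrable lebesgue D1 w" and wD2: "set_integrable lebesgue D2 w"
    using w D1_lmeas D1(3) D2_lmeas D2(4) by (auto intro: set_integrable_subset)
  define G where "G x = (\<integral>\<^sup>+y. indicator D2 y * ennreal (cmod (g x - g y)) \<partial>lborel)" for x
  have [measurable]: "G \<in> borel_measurable lborel"
    unfolding G_def by measurable
  have wg2: "AE y in lebesgue. y \<in> D2 \<longrightarrow> w y = g y"
    using wg D2(4) by (auto elim!: eventually_mono)
  have pointwise: "AE x in lebesgue.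
      indicator D1 x * ennreal (cmod (w x - avg D2 w)) \<le> ennreal (1 / measure lebesgue D2) * (indicator D1 x * G x)"
    using wg
  proof eventually_elim
    case (elim x)
    show ?case
      using ennreal_norm_diff_avg_le[OF D2_lmeas D2_pos wD2 wg2, of "w x"] elim D1(3)
      by (cases "x \<in> D1") (auto simp: G_def)
  qed
  have "ennreal (LINT x:D1|lebesgue. cmod (w x - avg D2 w))
      = (\<integral>\<^sup>+x. indicator D1 x * ennreal (cmod (w x - avg D2 w)) \<partial>lebesgue)"
    using wD1 D1_lmeas by (intro ennreal_set_integral_eq_nn_integral) (auto intro: set_integrable_norm)
  also have "\<dots> \<le> (\<integral>\<^sup>+x. ennreal (1 / measure lebesgue D2) * (indicator D1 x * G x) \<partial>lebesgue)"
    by (rule nn_integral_mono_AE[OF pointwise])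
  also have "\<dots> = ennreal (1 / measure lebesgue D2)
      * (\<integral>\<^sup>+x. \<integral>\<^sup>+y. indicator D1 x * indicator D2 y * ennreal (cmod (g x - g y)) \<partial>lborel \<partial>lborel)"
    unfolding G_def nn_integral_completion by (simp add: nn_integral_cmult mult.assoc)
  also have "\<dots> \<le> ennreal (1 / measure lebesgue D2) * ennreal (l * (measure lebesgue D1 * measure lebesgue D2 + \<kappa>))"
    using wg D1(3) D2(4)
    by (intro mult_left_mono pair_oscillation_le_energy[OF D D1 D2(1,2,4) close l energy g])
      (auto elim!: eventually_mono)
  also have "\<dots> = ennreal (1 / measure lebesgue D2 * (l * (measure lebesgue D1 * measure lebesgue D2 + \<kappa>)))"
    using D2_pos l \<kappa>_pos by (intro ennreal_mult[symmetric]) auto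
  also have "1 / measure lebesgue D2 * (l * (measure lebesgue D1 * measure lebesgue D2 + \<kappa>))
      = l * (measure lebesgue D1 + \<kappa> / measure lebesgue D2)"
    using D2_pos by (simp add: field_simps)
  finally show ?thesis
    using l D2_pos \<kappa>_pos by (simp add: ennreal_le_iff)
qed

lemma norm_avg_diff_le_energy:
  assumes D: "open D" "D \<subseteq> \<Omega>" and w: "set_integrable lebesgue D w"
    and D1: "open D1" "bounded D1" "D1 \<noteq> {}" "D1 \<subseteq> D"
    and D2: "open D2" "bounded D2" "D2 \<noteq> {}" "D2 \<subseteq> D"
    and close: "\<And>x y. x \<in> D1 \<Longrightarrow> y \<in> D2 \<Longrightarrow> dist x y < r0"
    and l: "l > 0" and energy: "Ffun \<phi> a D (\<lambda>x. w x / of_real l) \<le> 1"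
  shows "cmod (avg D1 w - avg D2 w) \<le> l * (1 + \<kappa> / (measure lebesgue D1 * measure lebesgue D2))"
proof -
  have D1_lmeas: "D1 \<in> lmeasurable"
    using D1 by (simp add: lmeasurable_open)
  have D1_pos: "measure lebesgue D1 > 0"
    using D1(1-3) by (rule measure_lebesgue_open_pos)
  have D2_pos: "measure lebesgue D2 > 0"
    using D2(1-3) by (rule measure_lebesgue_open_pos)
  have wD1: "set_integrable lebesgue D1 w"
    using w D1_lmeas D1(4) by (auto intro: set_integrable_subset)
  have "cmod (avg D1 w - avg D2 w) \<le> (LINT x:D1|lebesgue. cmod (w x - avg D2 w)) / measure lebesgue D1"
    by (rule norm_avg_diff_le[OF D1_lmeas D1_pos wD1])
  also have "\<dots> \<le> l * (measure lebesgue D1 + \<kappa> / measure lebesgue D2) / measure lebesgue D1"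
    using mean_oscillation_le_energy[OF D w D1(1,2,4) D2 close l energy] D1_pos
    by (intro divide_right_mono) auto
  also have "\<dots> = l * (1 + \<kappa> / (measure lebesgue D1 * measure lebesgue D2))"
    using D1_pos D2_pos by (simp add: field_simps)
  finally show ?thesis .
qed

lemma set_integrable_of_energy:
  assumes D: "open D" "D \<subseteq> \<Omega>" and E: "open E" "bounded E" "E \<noteq> {}" "E \<subseteq> D"
    and close: "\<And>x y. x \<in> E \<Longrightarrow> y \<in> E \<Longrightarrow> dist x y < r0"
    and l: "l > 0" and energy: "Ffun \<phi> a D (\<lambda>x. w x / of_real l) \<le> 1"
    and w: "set_borel_measurable lebesgue E w"
  shows "set_integrable lebesgue E w"
proof -
  obtain g where g: "g \<in> borel_measurable borel" and wg: "AE x in lebesgue. x \<in> E \<longrightarrow> w x = g x"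
    using w by (rule set_borel_measurable_lebesgue_AE_eq_borel)
  have [measurable]: "g \<in> borel_measurable lborel" "E \<in> sets lborel"
    using g E by auto
  define H where "H x = (\<integral>\<^sup>+y. indicator E x * indicator E y * ennreal (cmod (g x - g y)) \<partial>lborel)" for x
  have "integral\<^sup>N lborel H \<le> ennreal (l * (measure lebesgue E * measure lebesgue E + \<kappa>))"
    unfolding H_def using wg
    by (intro pair_oscillation_le_energy[OF D E(1,2,4) E(1,2,4) close l energy g]) auto
  then have "integral\<^sup>N lborel H \<noteq> \<infinity>"
    by (auto simp: top_unique)
  moreover have "H \<in> borel_measurable lborel"
    unfolding H_def by measurable
  ultimately have "AE x in lborel. H x \<noteq> \<infinity>"
    by (intro nn_integral_PInf_AE)
  then obtain x0 where x0: "x0 \<in> E" "H x0 \<noteq> \<infinity>"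
    using E(1,3) by (rule AE_lborel_obtain_in_open)
  then have "(\<integral>\<^sup>+y. indicator E y * ennreal (cmod (g x0 - g y)) \<partial>lborel) < \<infinity>"
    by (simp add: H_def less_top)
  then have "integrable lborel (\<lambda>y. indicator E y *\<^sub>R g y)"
    using E(1,2) by (intro set_integrable_lborel_if_deviation_finite[OF g]) auto
  then have "integrable lebesgue (\<lambda>y. indicator E y *\<^sub>R g y)"
    by (simp add: integrable_completion)
  moreover have "AE y in lebesgue. indicator E y *\<^sub>R g y = indicator E y *\<^sub>R w y"
    using wg by eventually_elim (auto simp: indicator_def)
  ultimately show ?thesis
    unfolding set_integrable_def
    by (rule integrable_cong_AE_imp[OF _ w[unfolded set_borel_measurable_def]])
qed

lemma mean_deviation_le_energy:
  assumes D: "open D" "D \<subseteq> \<Omega>" and w: "set_integrable lebesgue D w"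
    and P: "open P" "bounded P" "P \<noteq> {}" "P \<subseteq> D"
    and small: "\<And>x y. x \<in> P \<Longrightarrow> y \<in> P \<Longrightarrow> dist x y < r0"
    and l: "l > 0" and energy: "Ffun \<phi> a D (\<lambda>x. w x / of_real l) \<le> 1"
    and avg_close: "cmod (avg P w - c) \<le> K * l"
  shows "(LINT x:P|lebesgue. cmod (w x - c)) \<le> l * (measure lebesgue P + \<kappa> / measure lebesgue P + measure lebesgue P * K)"
proof -
  have P_lmeas: "P \<in> lmeasurable"
    using P(1,2) by (simp add: lmeasurable_open)
  then have wP: "set_integrable lebesgue P w"
    using w P(4) by (auto intro: set_integrable_subset)
  have "measure lebesgue P * cmod (avg P w - c) \<le> measure lebesgue P * (K * l)"
    using avg_close by (intro mult_left_mono) auto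
  moreover have "l * (measure lebesgue P + \<kappa> / measure lebesgue P + measure lebesgue P * K)
      = l * (measure lebesgue P + \<kappa> / measure lebesgue P) + measure lebesgue P * (K * l)"
    by (simp add: algebra_simps)
  ultimately show ?thesis
    using set_integral_norm_diff_le[OF P_lmeas wP, of c "avg P w"]
      mean_oscillation_le_energy[OF D w P(1,2,4) P small l energy]
    by linarith
qed

text \<open>Since \<open>|v|\<^sub>p\<^sub>,\<^sub>D\<close> is the infimum of the admissible \<open>l\<close>, this says
  \<open>|avg U v - avg V v| \<le> M |v|\<^sub>p\<^sub>,\<^sub>D\<close> for all \<open>v\<close> integrable on \<open>D\<close>.\<close>

definition avg_controlled :: "'a set \<Rightarrow> 'a set \<Rightarrow> 'a set \<Rightarrow> bool" where
  "avg_controlled D U V \<longleftrightarrow> (\<exists>M. \<forall>v l. l > 0 \<longrightarrow> set_integrable lebesgue D v \<longrightarrow>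
      Ffun \<phi> a D (\<lambda>x. v x / of_real l) \<le> 1 \<longrightarrow> cmod (avg U v - avg V v) \<le> M * l)"

lemma avg_controlled_sym: "avg_controlled D U V \<Longrightarrow> avg_controlled D V U"
  unfolding avg_controlled_def by (simp add: norm_minus_commute)

lemma avg_controlled_trans:
  assumes "avg_controlled D U V" "avg_controlled D V W"
  shows "avg_controlled D U W"
proof -
  obtain M1 where M1: "\<forall>v l. l > 0 \<longrightarrow> set_integrable lebesgue D v \<longrightarrow>
      Ffun \<phi> a D (\<lambda>x. v x / of_real l) \<le> 1 \<longrightarrow> cmod (avg U v - avg V v) \<le> M1 * l"
    using assms(1) unfolding avg_controlled_def by blast
  obtain M2 where M2: "\<forall>v l. l > 0 \<longrightarrow> set_integrable lebesgue D v \<longrightarrow>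
      Ffun \<phi> a D (\<lambda>x. v x / of_real l) \<le> 1 \<longrightarrow> cmod (avg V v - avg W v) \<le> M2 * l"
    using assms(2) unfolding avg_controlled_def by blast
  have "cmod (avg U v - avg W v) \<le> (M1 + M2) * l"
    if "l > 0" "set_integrable lebesgue D v" "Ffun \<phi> a D (\<lambda>x. v x / of_real l) \<le> 1" for v l
    using norm_triangle_ineq[of "avg U v - avg V v" "avg V v - avg W v"] M1 M2 that
    by (fastforce simp: distrib_right)
  then show ?thesis
    unfolding avg_controlled_def by blast
qed

lemma avg_controlled_if_close:
  assumes D: "open D" "D \<subseteq> \<Omega>"
    and U: "open U" "bounded U" "U \<noteq> {}" "U \<subseteq> D" and V: "open V" "bounded V" "V \<noteq> {}" "V \<subseteq> D"
    and close: "\<And>x y. x \<in> U \<Longrightarrow> y \<in> V \<Longrightarrow> dist x y < r0"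
  shows "avg_controlled D U V"
  unfolding avg_controlled_def
  using norm_avg_diff_le_energy[OF D _ U V close]
  by (intro exI[of _ "1 + \<kappa> / (measure lebesgue U * measure lebesgue V)"]) (simp add: mult.commute)

lemma avg_controlled_of_cover:
  assumes D: "open D" "D \<subseteq> \<Omega>" and F: "finite F"
    and P: "\<And>c. c \<in> F \<Longrightarrow> open (P c) \<and> bounded (P c) \<and> P c \<noteq> {} \<and> P c \<subseteq> D"
    and P_small: "\<And>c x y. c \<in> F \<Longrightarrow> x \<in> P c \<Longrightarrow> y \<in> P c \<Longrightarrow> dist x y < r0"
    and P_ctrl: "\<And>c. c \<in> F \<Longrightarrow> avg_controlled D (P c) V"
    and U: "U \<in> lmeasurable" "measure lebesgue U > 0" "U \<subseteq> (\<Union>c\<in>F. P c)"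
  shows "avg_controlled D U V"
proof -
  have "\<forall>c\<in>F. \<exists>M. \<forall>v l. l > 0 \<longrightarrow> set_integrable lebesgue D v \<longrightarrow>
      Ffun \<phi> a D (\<lambda>x. v x / of_real l) \<le> 1 \<longrightarrow> cmod (avg (P c) v - avg V v) \<le> M * l"
    using P_ctrl unfolding avg_controlled_def by blast
  then obtain M where M: "\<And>c v l. c \<in> F \<Longrightarrow> l > 0 \<Longrightarrow> set_integrable lebesgue D v \<Longrightarrow>
      Ffun \<phi> a D (\<lambda>x. v x / of_real l) \<le> 1 \<Longrightarrow> cmod (avg (P c) v - avg V v) \<le> M c * l"
    by metis
  have P_lmeas: "P c \<in> lmeasurable" if "c \<in> F" for c
    using P[OF that] by (simp add: lmeasurable_open)
  define S where "S = (\<Sum>c\<in>F. measure lebesgue (P c) + \<kappa> / measure lebesgue (P c) + measure lebesgue (P c) * M c)"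
  have "cmod (avg U v - avg V v) \<le> S / measure lebesgue U * l"
    if l: "l > 0" and v: "set_integrable lebesgue D v" and energy: "Ffun \<phi> a D (\<lambda>x. v x / of_real l) \<le> 1"
    for v l
  proof -
    have vP: "set_integrable lebesgue (P c) v" if "c \<in> F" for c
      using v P_lmeas[OF that] P[OF that] by (auto intro: set_integrable_subset)
    have vU: "set_integrable lebesgue U v"
      using v U(1,3) P by (force intro: set_integrable_subset)
    have piece: "(LINT x:P c|lebesgue. cmod (v x - avg V v))
        \<le> l * (measure lebesgue (P c) + \<kappa> / measure lebesgue (P c) + measure lebesgue (P c) * M c)"
      if c: "c \<in> F" for c
      using P[OF c] M[OF c l v energy]
      by (intro mean_deviation_le_energy[OF D v _ _ _ _ P_small[OF c] l energy]) auto
    have "cmod (avg U v - avg V v) \<le> (\<Sum>c\<in>F. LINT x:P c|lebesgue. cmod (v x - avg V v)) / measure lebesgue U"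
      using vU vP P_lmeas by (intro norm_avg_diff_le_sum_of_cover[OF F U]) auto
    also have "\<dots> \<le> l * S / measure lebesgue U"
      using piece U(2) unfolding S_def sum_distrib_left by (intro divide_right_mono sum_mono) auto
    finally show ?thesis
      by (simp add: field_simps)
  qed
  then show ?thesis
    unfolding avg_controlled_def by blast
qed

lemma avg_controlled_pieces:
  assumes \<omega>: "open \<omega>" "connected \<omega>" "\<omega> \<subseteq> \<Omega>" and \<rho>: "\<rho> > 0" "4 * \<rho> \<le> r0"
    and "x \<in> \<omega>" "y \<in> \<omega>"
  shows "avg_controlled \<omega> (\<omega> \<inter> ball x \<rho>) (\<omega> \<inter> ball y \<rho>)"
  using \<omega>(2) \<open>x \<in> \<omega>\<close> \<open>y \<in> \<omega>\<close>
proof (rule connected_induction_simple[where P = "\<lambda>y. avg_controlled \<omega> (\<omega> \<inter> ball x \<rho>) (\<omega> \<inter> ball y \<rho>)"])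
  show "avg_controlled \<omega> (\<omega> \<inter> ball x \<rho>) (\<omega> \<inter> ball x \<rho>)"
    unfolding avg_controlled_def by (intro exI[of _ 0]) simp
  fix b assume "b \<in> \<omega>"
  show "\<exists>T. openin (top_of_set \<omega>) T \<and> b \<in> T \<and> (\<forall>c\<in>T. \<forall>d\<in>T.
      avg_controlled \<omega> (\<omega> \<inter> ball x \<rho>) (\<omega> \<inter> ball c \<rho>) \<longrightarrow> avg_controlled \<omega> (\<omega> \<inter> ball x \<rho>) (\<omega> \<inter> ball d \<rho>))"
  proof (intro exI conjI ballI impI)
    show "openin (top_of_set \<omega>) (\<omega> \<inter> ball b \<rho>)"
      by (rule openin_open_Int) simp
    show "b \<in> \<omega> \<inter> ball b \<rho>"
      using \<open>b \<in> \<omega>\<close> \<rho> by simp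
    fix c d assume cd: "c \<in> \<omega> \<inter> ball b \<rho>" "d \<in> \<omega> \<inter> ball b \<rho>"
      and ctrl: "avg_controlled \<omega> (\<omega> \<inter> ball x \<rho>) (\<omega> \<inter> ball c \<rho>)"
    have "avg_controlled \<omega> (\<omega> \<inter> ball c \<rho>) (\<omega> \<inter> ball d \<rho>)"
    proof (rule avg_controlled_if_close[OF \<omega>(1,3)])
      show "dist p q < r0" if "p \<in> \<omega> \<inter> ball c \<rho>" "q \<in> \<omega> \<inter> ball d \<rho>" for p q
        using that cd \<rho> dist_triangle[of p q c] dist_triangle[of c q b] dist_triangle[of b q d]
        by (auto simp: dist_commute)
    qed (use cd \<rho> \<omega>(1) in auto)
    with ctrl show "avg_controlled \<omega> (\<omega> \<inter> ball x \<rho>) (\<omega> \<inter> ball d \<rho>)"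
      by (rule avg_controlled_trans)
  qed
qed

lemma avg_controlled_connected:
  assumes \<omega>: "open \<omega>" "connected \<omega>" "bounded \<omega>" "\<omega> \<subseteq> \<Omega>" and r0: "r0 > 0"
    and U: "U \<in> lmeasurable" "measure lebesgue U > 0" "U \<subseteq> \<omega>"
    and V: "V \<in> lmeasurable" "measure lebesgue V > 0" "V \<subseteq> \<omega>"
  shows "avg_controlled \<omega> U V"
proof -
  define P where "P c = \<omega> \<inter> ball c (r0 / 4)" for c
  have "r0 / 4 > 0"
    using r0 by simp
  with \<omega>(3) obtain F where F: "F \<subseteq> \<omega>" "finite F" "\<omega> \<subseteq> (\<Union>c\<in>F. ball c (r0 / 4))"
    by (rule bounded_obtain_finite_ball_cover)
  obtain x0 where x0: "x0 \<in> \<omega>"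
    using U(2,3) by fastforce
  have "avg_controlled \<omega> W (P x0)"
    if "W \<in> lmeasurable" "measure lebesgue W > 0" "W \<subseteq> \<omega>" for W
  proof (rule avg_controlled_of_cover[OF \<omega>(1,4) F(2), where P = P])
    show "open (P c) \<and> bounded (P c) \<and> P c \<noteq> {} \<and> P c \<subseteq> \<omega>" if "c \<in> F" for c
      using \<omega>(1) F(1) that r0 by (auto simp: P_def)
    show "dist x y < r0" if "c \<in> F" "x \<in> P c" "y \<in> P c" for c x y
      using that(2,3) dist_triangle[of x y c] r0 by (auto simp: P_def dist_commute)
    show "avg_controlled \<omega> (P c) (P x0)" if "c \<in> F" for c
      unfolding P_def using \<omega>(1,2,4) r0 F(1) that x0 by (intro avg_controlled_pieces) auto
    show "W \<subseteq> (\<Union>c\<in>F. P c)"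
      using that(3) F(3) unfolding P_def by blast
  qed (fact that)+
  then show ?thesis
    using U V by (blast intro: avg_controlled_trans avg_controlled_sym)
qed

lemma unique_representative_with_zero_mean:
  assumes \<Omega>_open: "open \<Omega>" and u: "in_Lambda \<phi> a \<Omega> u"
    and B: "open B" "bounded B" "B \<noteq> {}" "B \<subseteq> \<Omega>"
    and B_small: "\<And>x y. x \<in> B \<Longrightarrow> y \<in> B \<Longrightarrow> dist x y < r0"
  shows "\<exists>v. coset_eq \<Omega> u v \<and> avg B v = 0 \<and>
           (\<forall>w. coset_eq \<Omega> u w \<and> avg B w = 0 \<longrightarrow> (AE x in lebesgue. x \<in> \<Omega> \<longrightarrow> w x = v x))"
proof -
  have L1loc: "L1loc \<Omega> u" and finite: "pnorm \<phi> a \<Omega> u < \<infinity>"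
    using u by (auto simp: in_Lambda_def)
  obtain l where "l > 0" "Ffun \<phi> a \<Omega> (\<lambda>x. u x / of_real l) \<le> 1"
    using finite by (rule ex_energy_le_1_if_pnorm_finite)
  then have "set_integrable lebesgue B u"
    using L1loc_set_borel_measurable[OF L1loc B(1,4)]
    by (intro set_integrable_of_energy[OF \<Omega>_open order_refl B B_small])
  moreover have "B \<in> lmeasurable"
    using B(1,2) by (simp add: lmeasurable_open)
  moreover have "measure lebesgue B > 0"
    using B(1-3) by (rule measure_lebesgue_open_pos)
  ultimately show ?thesis
    using B(4) by (intro normalized_representative) auto
qed

lemma norm_avg_le_pnorm:
  assumes \<omega>: "open \<omega>" "connected \<omega>" "bounded \<omega>" "\<omega> \<subseteq> \<Omega>" and r0: "r0 > 0"
    and B: "B \<in> lmeasurable" "measure lebesgue B > 0" "B \<subseteq> \<omega>"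
  obtains C where "C > 0" "\<And>v. avg B v = 0 \<Longrightarrow> ennreal (cmod (avg \<omega> v)) \<le> ennreal C * pnorm \<phi> a \<omega> v"
proof -
  have \<omega>_lmeas: "\<omega> \<in> lmeasurable"
    using \<omega>(1,3) by (simp add: lmeasurable_open)
  then have "measure lebesgue \<omega> > 0"
    using B measure_mono_fmeasurable[of B \<omega> lebesgue] by simp
  then have "avg_controlled \<omega> \<omega> B"
    by (rule avg_controlled_connected[OF \<omega> r0 \<omega>_lmeas _ order_refl B])
  then obtain M where M: "\<And>v l. l > 0 \<Longrightarrow> set_integrable lebesgue \<omega> v \<Longrightarrow>
      Ffun \<phi> a \<omega> (\<lambda>x. v x / of_real l) \<le> 1 \<Longrightarrow> cmod (avg \<omega> v - avg B v) \<le> M * l"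
    unfolding avg_controlled_def by blast
  have "ennreal (cmod (avg \<omega> v)) \<le> ennreal (\<bar>M\<bar> + 1) * pnorm \<phi> a \<omega> v" if v: "avg B v = 0" for v
  proof (cases "set_integrable lebesgue \<omega> v")
    case True
    have "cmod (avg \<omega> v) \<le> (\<bar>M\<bar> + 1) * l"
      if "l > 0" "Ffun \<phi> a \<omega> (\<lambda>x. v x / of_real l) \<le> 1" for l
    proof -
      have "M * l \<le> (\<bar>M\<bar> + 1) * l"
        using that(1) by (intro mult_right_mono) auto
      then show ?thesis
        using M[OF that(1) True that(2)] v by simp
    qed
    then show ?thesis
      by (intro ennreal_le_mult_pnorm) auto
  next
    case False
    txt \<open>Then \<open>avg \<omega> v\<close> is the junk value \<open>0\<close>.\<close>
    then have "avg \<omega> v = 0"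
      by (simp add: avg_def set_lebesgue_integral_def set_integrable_def not_integrable_integral_eq)
    then show ?thesis
      by simp
  qed
  then show ?thesis
    by (intro that[of "\<bar>M\<bar> + 1"]) auto
qed

end

lemma coercive_kernelI:
  fixes \<phi> :: "real \<Rightarrow> 'a::euclidean_space \<Rightarrow> 'a \<Rightarrow> real" and a :: "'a \<Rightarrow> real"
  assumes a_nonneg: "\<And>z. a z \<ge> 0" and c0: "c0 > 0"
    and a_lower: "AE z in lebesgue. z \<in> ball 0 r0 \<longrightarrow> a z \<ge> c0"
    and \<phi>_nonneg: "\<And>t x y. t \<ge> 0 \<Longrightarrow> x \<in> \<Omega> \<Longrightarrow> y \<in> \<Omega> \<Longrightarrow> \<phi> t x y \<ge> 0"
    and p: "p \<ge> 1" and \<beta>: "\<beta> > 0" and c1: "c1 > 0"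
    and growth: "AE z in lebesgue. z \<in> \<Omega> \<times> \<Omega> \<longrightarrow>
         almost_incr_on {0<..} \<beta> (\<lambda>t. \<phi> t (fst z) (snd z) / t powr p) \<and> inverse c1 \<le> \<phi> 1 (fst z) (snd z)"
  shows "coercive_kernel \<phi> a \<Omega> r0 (\<beta> * c1 / c0)"
proof
  show "\<beta> * c1 / c0 > 0"
    using \<beta> c1 c0 by simp
  show "AE z in lebesgue. z \<in> \<Omega> \<times> \<Omega> \<longrightarrow> dist (fst z) (snd z) < r0 \<longrightarrow>
      (\<forall>t \<ge> 0. t \<le> 1 + \<beta> * c1 / c0 * (\<phi> t (fst z) (snd z) * a (fst z - snd z)))"
    using growth AE_lebesgue_pair_diff[OF a_lower]
  proof eventually_elim
    case (elim z)
    show ?case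
    proof (intro impI allI)
      fix t :: real
      assume z: "z \<in> \<Omega> \<times> \<Omega>" "dist (fst z) (snd z) < r0" and t: "t \<ge> 0"
      have \<phi>t: "\<phi> t (fst z) (snd z) \<ge> 0"
        using \<phi>_nonneg[OF t] z(1) by (simp add: mem_Times_iff)
      have "c0 * \<phi> t (fst z) (snd z) \<le> a (fst z - snd z) * \<phi> t (fst z) (snd z)"
        using elim(2) z(2) \<phi>t by (intro mult_right_mono) (auto simp: dist_norm norm_minus_commute)
      then have "\<beta> * c1 * \<phi> t (fst z) (snd z) \<le> \<beta> * c1 / c0 * (\<phi> t (fst z) (snd z) * a (fst z - snd z))"
        using \<beta> c1 c0 by (simp add: field_simps)
      moreover have "t \<le> 1 \<or> t \<le> \<beta> * c1 * \<phi> t (fst z) (snd z)"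
      proof (cases "t \<ge> 1")
        case True
        then show ?thesis
          using elim(1) z(1) almost_incr_on_powr_lower_bound[where f = "\<lambda>t. \<phi> t (fst z) (snd z)", OF _ p c1 _ True]
          by blast
      qed simp
      moreover have "0 \<le> \<beta> * c1 / c0 * (\<phi> t (fst z) (snd z) * a (fst z - snd z))"
        using \<beta> c1 c0 \<phi>t a_nonneg by simp
      ultimately show "t \<le> 1 + \<beta> * c1 / c0 * (\<phi> t (fst z) (snd z) * a (fst z - snd z))"
        by linarith
    qed
  qed
qed

theorem lemma6p2:
  fixes \<phi> :: "real \<Rightarrow> 'a::euclidean_space \<Rightarrow> 'a \<Rightarrow> real"
    and a :: "'a \<Rightarrow> real" and \<Omega> \<omega> :: "'a set"
    and r0 c0 rB :: real and xB :: 'a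
  assumes \<Omega>_open: "open \<Omega>"
    and a_int: "integrable lebesgue a" and a_nonneg: "\<And>z. a z \<ge> 0"
    and r0_pos: "r0 > 0" and c0_pos: "c0 > 0"
    and a_lower: "AE z in lebesgue. z \<in> ball 0 r0 \<longrightarrow> a z \<ge> c0"
    and components_chain: "\<not> connected \<Omega> \<Longrightarrow>
        \<exists>(I :: nat set) (\<Omega>s :: nat \<Rightarrow> 'a set). ((\<exists>n. I = {..<n}) \<or> I = UNIV)
          \<and> bij_betw \<Omega>s I (components \<Omega>)
          \<and> (\<forall>i. i \<in> I \<and> Suc i \<in> I \<longrightarrow> setdist (\<Omega>s i) (\<Omega>s (Suc i)) < diameter (ball (0::'a) r0))"
    and \<phi>_nonneg: "\<And>t x y. t \<ge> 0 \<Longrightarrow> x \<in> \<Omega> \<Longrightarrow> y \<in> \<Omega> \<Longrightarrow> \<phi> t x y \<ge> 0"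
    and C1: "\<And>u. L1loc \<Omega> u \<Longrightarrow>
        (\<lambda>z. \<phi> (cmod (u (fst z) - u (snd z))) (fst z) (snd z)) \<in> borel_measurable (lebesgue_on (\<Omega> \<times> \<Omega>))"
    and C2: "\<And>\<epsilon>. \<epsilon> > 0 \<Longrightarrow> \<exists>\<delta>. 0 < \<delta> \<and> \<delta> < 1 \<and>
        (AE z in lebesgue. z \<in> \<Omega> \<times> \<Omega> \<longrightarrow>
           (\<forall>s t. s > 0 \<and> t > 0 \<and> \<bar>s - t\<bar> \<ge> \<epsilon> * max s t \<longrightarrow>
              \<phi> ((s + t) / 2) (fst z) (snd z) \<le> (1 - \<delta>) * ((\<phi> s (fst z) (snd z) + \<phi> t (fst z) (snd z)) / 2)))"
    and C3: "\<exists>pm pp \<beta>. 1 < pm \<and> pm \<le> pp \<and> \<beta> \<ge> 1 \<and>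
        (AE z in lebesgue. z \<in> \<Omega> \<times> \<Omega> \<longrightarrow>
           almost_incr_on {0<..} \<beta> (\<lambda>t. \<phi> t (fst z) (snd z) / t powr pm)
         \<and> almost_decr_on {0<..} \<beta> (\<lambda>t. \<phi> t (fst z) (snd z) / t powr pp))"
    and C4: "\<exists>c1 > 0. (AE z in lebesgue. z \<in> \<Omega> \<times> \<Omega> \<longrightarrow>
           inverse c1 \<le> \<phi> 1 (fst z) (snd z) \<and> \<phi> 1 (fst z) (snd z) \<le> c1
         \<and> \<phi> 0 (fst z) (snd z) = 0 \<and> (\<forall>t > 0. \<phi> t (fst z) (snd z) > 0))"
    and rB_pos: "rB > 0"
    and B_in_comp: "\<exists>C \<in> components \<Omega>. ball xB rB \<subseteq> C"
    and B_diam: "diameter (ball xB rB) \<le> diameter (ball (0::'a) r0) / 2"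
    and \<omega>_domain: "open \<omega>" "connected \<omega>" "bounded \<omega>" "smooth_boundary \<omega>"
    and \<omega>_sub: "\<omega> \<subseteq> \<Omega>" and B_sub: "ball xB rB \<subseteq> \<omega>"
  shows "\<exists>C > 0. \<forall>u. in_Lambda \<phi> a \<Omega> u \<longrightarrow>
     (\<exists>v. coset_eq \<Omega> u v \<and> avg (ball xB rB) v = 0 \<and>
          (\<forall>w. coset_eq \<Omega> u w \<and> avg (ball xB rB) w = 0 \<longrightarrow> (AE x in lebesgue. x \<in> \<Omega> \<longrightarrow> w x = v x)))
   \<and> (\<forall>v. coset_eq \<Omega> u v \<and> avg (ball xB rB) v = 0 \<longrightarrow>
          ennreal (cmod (avg \<omega> v)) \<le> ennreal C * pnorm \<phi> a \<omega> v)"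
proof -
  obtain pm pp \<beta> where pm: "1 < pm" and \<beta>: "\<beta> \<ge> 1" and C3_AE: "AE z in lebesgue. z \<in> \<Omega> \<times> \<Omega> \<longrightarrow>
      almost_incr_on {0<..} \<beta> (\<lambda>t. \<phi> t (fst z) (snd z) / t powr pm)
    \<and> almost_decr_on {0<..} \<beta> (\<lambda>t. \<phi> t (fst z) (snd z) / t powr pp)"
    using C3 by blast
  obtain c1 where c1: "c1 > 0" and C4_AE: "AE z in lebesgue. z \<in> \<Omega> \<times> \<Omega> \<longrightarrow>
      inverse c1 \<le> \<phi> 1 (fst z) (snd z) \<and> \<phi> 1 (fst z) (snd z) \<le> c1
    \<and> \<phi> 0 (fst z) (snd z) = 0 \<and> (\<forall>t > 0. \<phi> t (fst z) (snd z) > 0)"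
    using C4 by blast
  have "AE z in lebesgue. z \<in> \<Omega> \<times> \<Omega> \<longrightarrow>
      almost_incr_on {0<..} \<beta> (\<lambda>t. \<phi> t (fst z) (snd z) / t powr pm) \<and> inverse c1 \<le> \<phi> 1 (fst z) (snd z)"
    using C3_AE C4_AE by eventually_elim auto
  then interpret coercive_kernel \<phi> a \<Omega> r0 "\<beta> * c1 / c0"
    using pm \<beta> by (intro coercive_kernelI[OF a_nonneg c0_pos a_lower \<phi>_nonneg _ _ c1]) auto
  have B_small: "dist x y < r0" if "x \<in> ball xB rB" "y \<in> ball xB rB" for x y
    using that B_diam rB_pos r0_pos dist_triangle[of x y xB] by (auto simp: dist_commute)
  have "ball xB rB \<in> lmeasurable" "measure lebesgue (ball xB rB) > 0"
    using rB_pos by (auto intro: measure_lebesgue_open_pos)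
  then obtain C where "C > 0"
    and C: "\<And>v. avg (ball xB rB) v = 0 \<Longrightarrow> ennreal (cmod (avg \<omega> v)) \<le> ennreal C * pnorm \<phi> a \<omega> v"
    using norm_avg_le_pnorm[OF \<omega>_domain(1-3) \<omega>_sub r0_pos _ _ B_sub] by blast
  show ?thesis
  proof (intro exI[of _ C] conjI allI impI)
    fix u assume "in_Lambda \<phi> a \<Omega> u"
    then show "\<exists>v. coset_eq \<Omega> u v \<and> avg (ball xB rB) v = 0 \<and>
        (\<forall>w. coset_eq \<Omega> u w \<and> avg (ball xB rB) w = 0 \<longrightarrow> (AE x in lebesgue. x \<in> \<Omega> \<longrightarrow> w x = v x))"
      using rB_pos B_sub \<omega>_sub B_small by (intro unique_representative_with_zero_mean[OF \<Omega>_open]) auto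
  qed (use \<open>C > 0\<close> C in auto)
qed

end
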